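(* Assume the normalization $\sigma_j=e$, $\eta_j=i\infty$ and $\begin{pmatrix}1&1\\0&1\end{pmatrix}\in\Gamma$, and let $\kappa>0$. Let $p=\Gamma\begin{pmatrix}a&b\\c&d\end{pmatrix}\in\Gamma\backslash\mathrm{PSL}(2,\mathbb R)$ with $c\neq0$. Then $p\notin S_{j,\kappa}$ if and only if $a/c\notin S_\kappa$.
   Context: $G=\mathrm{PSL}(2,\mathbb R)$ acts linearly on $\mathbb R^2/\pm$; $\Gamma<G$ is a non-uniform lattice, one of whose cusps $\eta_j$ is at $i\infty$ with $\sigma_j=e$; $N=\{\begin{pmatrix}1&t\\0&1\end{pmatrix}\}$, $e_1=(1,0)^T$, $\Gamma_j=\Gamma\cap N$, $\pi_j:\Gamma_j\backslash G\to\Gamma\backslash G$ the projection, $m_j(\Gamma_jg)=g^{-1}e_1\in\mathbb R^2/\pm$. $S_{j,\kappa}$ is the set of $p\in\Gamma\backslash G$ for which there exist $\mu,\nu>0$ such that every $(a',b')^T\in m_j(\pi_j^{-1}(p))$ satisfies $|b'|\ge\mu$ or $|a'|^\kappa|b'|\ge\nu$. A real number $x$ is Diophantine of type $\kappa$ with respect to $\Gamma e_1$ if there is $\tilde C>0$ with $|\beta|^\kappa|x\beta-\alpha|\ge\tilde C$ for all $(\alpha,\beta)\in\Gamma e_1$ with $\beta\ne0$; $S_\kappa\subset\mathbb R$ denotes the set of such $x$. *)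

theory Defs
  imports "HOL-Analysis.Analysis"
begin

text \<open>Elements of PSL(2,R) are represented by matrices in SL(2,R); a subgroup of
PSL(2,R) is represented by its full preimage in SL(2,R) (which contains -I).
Entry g $ 1 $ 1 = a, g $ 1 $ 2 = b, g $ 2 $ 1 = c, g $ 2 $ 2 = d.\<close>

type_synonym mat2 = "real^2^2"

definition SL2 :: "mat2 set" where
  "SL2 = {g. det g = 1}"

definition mat2 :: "real \<Rightarrow> real \<Rightarrow> real \<Rightarrow> real \<Rightarrow> mat2" where
  "mat2 a b c d = vector [vector [a, b], vector [c, d]]"

definition e1 :: "real^2" where
  "e1 = vector [1, 0]"

definition transl :: "real \<Rightarrow> mat2" where
  "transl t = mat2 1 t 0 1"

definition psl_subgroup :: "mat2 set \<Rightarrow> bool" where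
  "psl_subgroup \<Gamma> \<longleftrightarrow> \<Gamma> \<subseteq> SL2 \<and> mat 1 \<in> \<Gamma> \<and> - mat 1 \<in> \<Gamma> \<and>
     (\<forall>g\<in>\<Gamma>. \<forall>h\<in>\<Gamma>. g ** h \<in> \<Gamma>) \<and> (\<forall>g\<in>\<Gamma>. matrix_inv g \<in> \<Gamma>)"

definition discrete_set :: "mat2 set \<Rightarrow> bool" where
  "discrete_set \<Gamma> \<longleftrightarrow> (\<forall>g\<in>\<Gamma>. \<exists>e>0. \<forall>h\<in>\<Gamma>. dist h g < e \<longrightarrow> h = g)"

definition mobius :: "mat2 \<Rightarrow> complex \<Rightarrow> complex" where
  "mobius g z = (of_real (g$1$1) * z + of_real (g$1$2)) / (of_real (g$2$1) * z + of_real (g$2$2))"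

definition upper_half_plane :: "complex set" where
  "upper_half_plane = {z. Im z > 0}"

definition hyp_area :: "complex measure" where
  "hyp_area = density lborel (\<lambda>z. ennreal (1 / (Im z)^2))"

text \<open>Lattice: discrete subgroup of finite covolume, i.e. a measurable set of finite
hyperbolic area whose translates cover the upper half plane (equivalently, finite Haar
covolume in PSL(2,R) = H x compact).\<close>
definition psl_lattice :: "mat2 set \<Rightarrow> bool" where
  "psl_lattice \<Gamma> \<longleftrightarrow> psl_subgroup \<Gamma> \<and> discrete_set \<Gamma> \<and>
     (\<exists>F. F \<in> sets lborel \<and> F \<subseteq> upper_half_plane \<and> emeasure hyp_area F < \<infinity> \<and>
          (\<Union>\<gamma>\<in>\<Gamma>. mobius \<gamma> ` F) = upper_half_plane)"

definition nonuniform :: "mat2 set \<Rightarrow> bool" where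
  "nonuniform \<Gamma> \<longleftrightarrow> \<not> (\<exists>K. compact K \<and> K \<subseteq> SL2 \<and> {\<gamma> ** k | \<gamma> k. \<gamma> \<in> \<Gamma> \<and> k \<in> K} = SL2)"

definition coset :: "mat2 set \<Rightarrow> mat2 \<Rightarrow> mat2 set" where
  "coset \<Gamma> g = (\<lambda>\<gamma>. \<gamma> ** g) ` \<Gamma>"

text \<open>m_j(Gamma_j h) = h^{-1} e1 (well defined since N fixes e1); vectors in R^2/+-
are represented by either lift, all conditions below are sign-invariant.\<close>
definition m_j :: "mat2 \<Rightarrow> real^2" where
  "m_j h = matrix_inv h *v e1"

text \<open>S_{j,kappa} as a set of cosets p; m_j(pi_j^{-1}(p)) = {m_j h | h in p}.\<close>
definition S_jk :: "mat2 set \<Rightarrow> real \<Rightarrow> mat2 set set" where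
  "S_jk \<Gamma> \<kappa> = {p. \<exists>\<mu>>0. \<exists>\<nu>>0. \<forall>v\<in>m_j ` p.
       \<bar>v$2\<bar> \<ge> \<mu> \<or> \<bar>v$1\<bar> powr \<kappa> * \<bar>v$2\<bar> \<ge> \<nu>}"

definition S_k :: "mat2 set \<Rightarrow> real \<Rightarrow> real set" where
  "S_k \<Gamma> \<kappa> = {x. \<exists>C>0. \<forall>w\<in>(\<lambda>\<gamma>. \<gamma> *v e1) ` \<Gamma>.
       w$2 \<noteq> 0 \<longrightarrow> \<bar>w$2\<bar> powr \<kappa> * \<bar>x * w$2 - w$1\<bar> \<ge> C}"

end

theory Submission
  imports Defs
begin

text \<open>Write \<open>g = mat2 a b c d\<close>. Since \<open>m_j (\<gamma> g) = g\<^sup>-\<^sup>1 \<gamma>\<^sup>-\<^sup>1 e1\<close>, the coset \<open>\<Gamma> g\<close> is sent by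
  \<open>m_j\<close> onto \<open>g\<^sup>-\<^sup>1 (\<Gamma> e1)\<close>, and \<open>g\<^sup>-\<^sup>1\<close> maps \<open>(\<alpha>, \<beta>)\<close> to \<open>(s, t) = (d\<alpha> - b\<beta>, a\<beta> - c\<alpha>)\<close>, where
  \<open>t = c (a/c \<beta> - \<alpha>)\<close> and \<open>\<beta> = c s + d t\<close>. Hence near the cusp (small \<open>t\<close>) \<open>\<beta>\<close> is
  comparable to \<open>s\<close>, and the two Diophantine conditions differ only by constants. Two properties
  of \<open>\<Gamma> e1\<close> close the gaps: its points with \<open>\<beta> = 0\<close> are \<open>(\<plusminus>1, 0)\<close>, and it is invariant under
  the integer translations, which make \<open>t\<close> smaller than \<open>c \<beta>\<close> and thereby bound the nonzero
  \<open>\<bar>\<beta>\<bar>\<close> away from \<open>0\<close>.\<close>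

definition adj2 :: "mat2 \<Rightarrow> mat2" where
  "adj2 h = mat2 (h$2$2) (- h$1$2) (- h$2$1) (h$1$1)"

lemma mat2_nth [simp]:
  "mat2 a b c d $1$1 = a" "mat2 a b c d $1$2 = b" "mat2 a b c d $2$1 = c" "mat2 a b c d $2$2 = d"
  by (simp_all add: mat2_def)

lemma adj2_nth [simp]:
  "adj2 h $1$1 = h$2$2" "adj2 h $1$2 = - h$1$2" "adj2 h $2$1 = - h$2$1" "adj2 h $2$2 = h$1$1"
  by (simp_all add: adj2_def)

lemma matrix_vector_mult_2_nth [simp]:
  fixes h :: mat2
  shows "(h *v v)$1 = h$1$1 * v$1 + h$1$2 * v$2" "(h *v v)$2 = h$2$1 * v$1 + h$2$2 * v$2"
  by (simp_all add: matrix_vector_mult_def sum_2)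

lemma matrix_matrix_mult_2_nth [simp]:
  fixes h k :: mat2
  shows "(h ** k)$1$1 = h$1$1 * k$1$1 + h$1$2 * k$2$1" "(h ** k)$1$2 = h$1$1 * k$1$2 + h$1$2 * k$2$2"
    "(h ** k)$2$1 = h$2$1 * k$1$1 + h$2$2 * k$2$1" "(h ** k)$2$2 = h$2$1 * k$1$2 + h$2$2 * k$2$2"
  by (simp_all add: matrix_matrix_mult_def sum_2)

lemma e1_nth [simp]: "e1$1 = 1" "e1$2 = 0"
  by (simp_all add: e1_def)

lemma adj2_adj2 [simp]: "adj2 (adj2 h) = h"
  by (simp add: vec_eq_iff forall_2)

lemma adj2_mult: "adj2 (h ** k) = adj2 k ** adj2 h"
  by (simp add: vec_eq_iff forall_2 algebra_simps)

lemma matrix_mult_adj2: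
  assumes "det h = 1"
  shows "h ** adj2 h = mat 1" "adj2 h ** h = mat 1"
  using assms by (auto simp: det_2 vec_eq_iff forall_2 mat_def algebra_simps)

lemma matrix_inv_eq_adj2:
  assumes "det h = 1"
  shows "matrix_inv h = adj2 h"
proof -
  have inv: "h ** matrix_inv h = mat 1"
    unfolding matrix_inv_def by (rule someI2[of _ "adj2 h"]) (use matrix_mult_adj2[OF assms] in auto)
  have "adj2 h = (adj2 h ** h) ** matrix_inv h"
    by (simp add: matrix_mul_assoc[symmetric] inv matrix_mul_rid)
  also have "\<dots> = matrix_inv h"
    by (simp add: matrix_mult_adj2[OF assms] matrix_mul_lid)
  finally show ?thesis ..
qed

lemma psl_subgroup_adj2:
  assumes "psl_subgroup \<Gamma>" "\<gamma> \<in> \<Gamma>"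
  shows "adj2 \<gamma> \<in> \<Gamma>"
  using assms matrix_inv_eq_adj2 unfolding psl_subgroup_def SL2_def by fastforce

lemma m_j_coset_image:
  assumes "psl_subgroup \<Gamma>" "g \<in> SL2"
  shows "m_j ` coset \<Gamma> g = (\<lambda>w. adj2 g *v w) ` (\<lambda>\<gamma>. \<gamma> *v e1) ` \<Gamma>"
proof -
  have m_j: "m_j (\<gamma> ** g) = adj2 g *v (adj2 \<gamma> *v e1)" if "\<gamma> \<in> \<Gamma>" for \<gamma>
  proof -
    have "det (\<gamma> ** g) = 1"
      using assms that unfolding psl_subgroup_def SL2_def by (auto simp: det_mul)
    then show ?thesis
      by (simp add: m_j_def matrix_inv_eq_adj2 adj2_mult matrix_vector_mul_assoc)
  qed
  have "m_j ` coset \<Gamma> g = (\<lambda>\<gamma>. adj2 g *v (adj2 \<gamma> *v e1)) ` \<Gamma>"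
    unfolding coset_def image_image using m_j by (rule image_cong[OF refl])
  also have "\<dots> = (\<lambda>\<gamma>. adj2 g *v (\<gamma> *v e1)) ` adj2 ` \<Gamma>"
    by (simp add: image_image)
  also have "adj2 ` \<Gamma> = \<Gamma>"
    using psl_subgroup_adj2[OF assms(1)] by (force intro: image_eqI[of _ adj2 "adj2 _"])
  finally show ?thesis
    by (simp add: image_image)
qed

lemma abs_powr_le_mult_powr:
  fixes x y K \<kappa> :: real
  assumes "0 \<le> \<kappa>" "0 \<le> K" "\<bar>x\<bar> \<le> K * \<bar>y\<bar>"
  shows "\<bar>x\<bar> powr \<kappa> \<le> K powr \<kappa> * \<bar>y\<bar> powr \<kappa>"
proof -
  have "\<bar>x\<bar> powr \<kappa> \<le> (K * \<bar>y\<bar>) powr \<kappa>"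
    using assms by (intro powr_mono2) auto
  also have "\<dots> = K powr \<kappa> * \<bar>y\<bar> powr \<kappa>"
    using assms(2) by (simp add: powr_mult)
  finally show ?thesis .
qed

lemma powr_inverse_le_of_le_powr:
  fixes m x p :: real
  assumes "0 \<le> m" "0 \<le> x" "0 < p" "m \<le> x powr p"
  shows "m powr (1 / p) \<le> x"
proof -
  have "m powr (1 / p) \<le> (x powr p) powr (1 / p)"
    using assms by (intro powr_mono2) auto
  also have "\<dots> = x"
    using assms by (simp add: powr_powr)
  finally show ?thesis .
qed

lemma one_less_abs_of_powr_mult:
  fixes x t m \<kappa> :: real
  assumes "0 < \<kappa>" "\<bar>t\<bar> < m" "m \<le> \<bar>x\<bar> powr \<kappa> * \<bar>t\<bar>"
  shows "1 < \<bar>x\<bar>"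
proof (rule ccontr)
  assume "\<not> 1 < \<bar>x\<bar>"
  then have "\<bar>x\<bar> powr \<kappa> * \<bar>t\<bar> \<le> \<bar>t\<bar>"
    using assms(1) by (intro mult_left_le_one_le powr_le1) auto
  with assms(2,3) show False
    by simp
qed

lemma sl2_lower_left_bounds:
  fixes a b c d \<alpha> \<beta> :: real
  assumes "a * d - b * c = 1"
  shows "\<bar>\<beta>\<bar> \<le> \<bar>c\<bar> * \<bar>d * \<alpha> - b * \<beta>\<bar> + \<bar>d\<bar> * \<bar>a * \<beta> - c * \<alpha>\<bar>"
    and "\<bar>c\<bar> * \<bar>d * \<alpha> - b * \<beta>\<bar> \<le> \<bar>\<beta>\<bar> + \<bar>d\<bar> * \<bar>a * \<beta> - c * \<alpha>\<bar>"
proof -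
  have "\<beta> = c * (d * \<alpha> - b * \<beta>) + d * (a * \<beta> - c * \<alpha>)"
    using assms by algebra
  then show "\<bar>\<beta>\<bar> \<le> \<bar>c\<bar> * \<bar>d * \<alpha> - b * \<beta>\<bar> + \<bar>d\<bar> * \<bar>a * \<beta> - c * \<alpha>\<bar>"
    and "\<bar>c\<bar> * \<bar>d * \<alpha> - b * \<beta>\<bar> \<le> \<bar>\<beta>\<bar> + \<bar>d\<bar> * \<bar>a * \<beta> - c * \<alpha>\<bar>"
    by (metis abs_mult abs_triangle_ineq add_diff_cancel_right' abs_triangle_ineq4)+
qed

lemma sl2_abs_upper_right_le:
  fixes a b c d \<alpha> \<beta> L :: real
  assumes "a * d - b * c = 1" "c \<noteq> 0" "\<bar>d\<bar> * \<bar>a * \<beta> - c * \<alpha>\<bar> \<le> L * \<bar>\<beta>\<bar>"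
  shows "\<bar>d * \<alpha> - b * \<beta>\<bar> \<le> (1 + L) / \<bar>c\<bar> * \<bar>\<beta>\<bar>"
proof -
  have "\<bar>c\<bar> * \<bar>d * \<alpha> - b * \<beta>\<bar> \<le> (1 + L) * \<bar>\<beta>\<bar>"
    using sl2_lower_left_bounds(2)[OF assms(1), of \<alpha> \<beta>] assms(3) by (simp add: algebra_simps)
  then show ?thesis
    using assms(2) by (simp add: field_simps)
qed

lemma abs_divide_approx:
  fixes a c \<alpha> \<beta> :: real
  assumes "c \<noteq> 0"
  shows "\<bar>a / c * \<beta> - \<alpha>\<bar> = \<bar>a * \<beta> - c * \<alpha>\<bar> / \<bar>c\<bar>"
  using assms by (simp add: field_simps flip: abs_divide)

lemma exists_int_abs_diff_mult_less:
  fixes x r :: real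
  assumes "r \<noteq> 0"
  obtains n :: int where "\<bar>x - of_int n * r\<bar> < \<bar>r\<bar>"
proof
  have "0 \<le> x / r - \<lfloor>x / r\<rfloor>" "x / r - \<lfloor>x / r\<rfloor> < 1"
    by linarith+
  then have "\<bar>x / r - \<lfloor>x / r\<rfloor>\<bar> * \<bar>r\<bar> < 1 * \<bar>r\<bar>"
    using assms by (intro mult_strict_right_mono) auto
  also have "\<bar>x / r - \<lfloor>x / r\<rfloor>\<bar> * \<bar>r\<bar> = \<bar>x - of_int \<lfloor>x / r\<rfloor> * r\<bar>"
    unfolding abs_mult[symmetric] using assms by (simp add: left_diff_distrib)
  finally show "\<bar>x - of_int \<lfloor>x / r\<rfloor> * r\<bar> < \<bar>r\<bar>"
    by simp
qed

lemma diophantine_imp_cusp_estimate: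
  fixes a b c d \<kappa> C :: real
  assumes det: "a * d - b * c = 1" and "c \<noteq> 0" "\<kappa> > 0" "C > 0"
  obtains \<mu> \<nu> where "\<mu> > 0" "\<nu> > 0"
    "\<And>\<alpha> \<beta>. (\<beta> = 0 \<Longrightarrow> \<bar>\<alpha>\<bar> = 1) \<Longrightarrow> (\<beta> \<noteq> 0 \<Longrightarrow> C \<le> \<bar>\<beta>\<bar> powr \<kappa> * \<bar>a / c * \<beta> - \<alpha>\<bar>) \<Longrightarrow>
       \<mu> \<le> \<bar>a * \<beta> - c * \<alpha>\<bar> \<or> \<nu> \<le> \<bar>d * \<alpha> - b * \<beta>\<bar> powr \<kappa> * \<bar>a * \<beta> - c * \<alpha>\<bar>"
proof
  define \<mu> where "\<mu> = min \<bar>c\<bar> (min (C * \<bar>c\<bar>) (1 / (2 * (\<bar>d\<bar> + 1))))"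
  define \<nu> where "\<nu> = C * \<bar>c\<bar> / (2 * \<bar>c\<bar>) powr \<kappa>"
  show "\<mu> > 0" "\<nu> > 0"
    using assms by (auto simp: \<mu>_def \<nu>_def add_pos_nonneg)
  fix \<alpha> \<beta> :: real
  assume primitive: "\<beta> = 0 \<Longrightarrow> \<bar>\<alpha>\<bar> = 1"
    and approx: "\<beta> \<noteq> 0 \<Longrightarrow> C \<le> \<bar>\<beta>\<bar> powr \<kappa> * \<bar>a / c * \<beta> - \<alpha>\<bar>"
  define s where "s = d * \<alpha> - b * \<beta>"
  define t where "t = a * \<beta> - c * \<alpha>"
  have "\<mu> \<le> \<bar>t\<bar> \<or> \<nu> \<le> \<bar>s\<bar> powr \<kappa> * \<bar>t\<bar>"
  proof (cases "\<mu> \<le> \<bar>t\<bar>")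
    case False
    then have t_small: "\<bar>t\<bar> < \<mu>" by simp
    have "\<beta> \<noteq> 0"
    proof
      assume "\<beta> = 0"
      then have "\<bar>t\<bar> = \<bar>c\<bar>"
        using primitive by (simp add: t_def abs_mult)
      with t_small show False
        by (simp add: \<mu>_def)
    qed
    then have approx_t: "C * \<bar>c\<bar> \<le> \<bar>\<beta>\<bar> powr \<kappa> * \<bar>t\<bar>"
      using approx \<open>c \<noteq> 0\<close> by (simp add: abs_divide_approx t_def field_simps)
    have "\<mu> \<le> \<bar>\<beta>\<bar> powr \<kappa> * \<bar>t\<bar>"
      using approx_t by (simp add: \<mu>_def min_le_iff_disj)
    with \<open>\<kappa> > 0\<close> t_small have "1 < \<bar>\<beta>\<bar>"
      by (rule one_less_abs_of_powr_mult)
    moreover have "\<bar>d\<bar> * \<bar>t\<bar> \<le> 1 / 2"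
    proof -
      have "\<bar>d\<bar> * \<bar>t\<bar> \<le> (\<bar>d\<bar> + 1) * (1 / (2 * (\<bar>d\<bar> + 1)))"
        using t_small by (intro mult_mono) (auto simp: \<mu>_def)
      also have "\<dots> = 1 / 2"
        by (simp add: add_pos_nonneg)
      finally show ?thesis .
    qed
    ultimately have "\<bar>\<beta>\<bar> \<le> (2 * \<bar>c\<bar>) * \<bar>s\<bar>"
      using sl2_lower_left_bounds(1)[OF det, of \<beta> \<alpha>] by (simp add: s_def t_def)
    then have "\<bar>\<beta>\<bar> powr \<kappa> * \<bar>t\<bar> \<le> (2 * \<bar>c\<bar>) powr \<kappa> * \<bar>s\<bar> powr \<kappa> * \<bar>t\<bar>"
      using \<open>\<kappa> > 0\<close> by (intro mult_right_mono abs_powr_le_mult_powr) auto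
    with approx_t have "C * \<bar>c\<bar> \<le> (2 * \<bar>c\<bar>) powr \<kappa> * (\<bar>s\<bar> powr \<kappa> * \<bar>t\<bar>)"
      by (simp add: mult.assoc)
    then show ?thesis
      using \<open>c \<noteq> 0\<close> by (simp add: \<nu>_def divide_le_eq mult.commute)
  qed simp
  then show "\<mu> \<le> \<bar>a * \<beta> - c * \<alpha>\<bar> \<or> \<nu> \<le> \<bar>d * \<alpha> - b * \<beta>\<bar> powr \<kappa> * \<bar>a * \<beta> - c * \<alpha>\<bar>"
    by (simp add: s_def t_def)
qed

lemma cusp_estimate_imp_lower_left_bounded_below:
  fixes a b c d \<kappa> \<mu> \<nu> :: real
  assumes det: "a * d - b * c = 1" and "c \<noteq> 0" "\<kappa> > 0" "\<mu> > 0" "\<nu> > 0"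
  obtains \<epsilon> where "\<epsilon> > 0"
    "\<And>\<alpha> \<beta>. \<beta> \<noteq> 0 \<Longrightarrow> \<bar>a * \<beta> - c * \<alpha>\<bar> < \<bar>c * \<beta>\<bar> \<Longrightarrow>
       \<mu> \<le> \<bar>a * \<beta> - c * \<alpha>\<bar> \<or> \<nu> \<le> \<bar>d * \<alpha> - b * \<beta>\<bar> powr \<kappa> * \<bar>a * \<beta> - c * \<alpha>\<bar> \<Longrightarrow> \<epsilon> \<le> \<bar>\<beta>\<bar>"
proof
  define K where "K = (1 + \<bar>c\<bar> * \<bar>d\<bar>) / \<bar>c\<bar>"
  define m where "m = \<nu> / (K powr \<kappa> * \<bar>c\<bar>)"
  define \<epsilon> where "\<epsilon> = min (\<mu> / \<bar>c\<bar>) (m powr (1 / (\<kappa> + 1)))"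
  have "K > 0"
    using \<open>c \<noteq> 0\<close> by (simp add: K_def add_pos_nonneg)
  then show "\<epsilon> > 0"
    using assms by (simp add: \<epsilon>_def m_def)
  fix \<alpha> \<beta> :: real
  define s where "s = d * \<alpha> - b * \<beta>"
  define t where "t = a * \<beta> - c * \<alpha>"
  assume "\<beta> \<noteq> 0" and t_reduced: "\<bar>a * \<beta> - c * \<alpha>\<bar> < \<bar>c * \<beta>\<bar>"
    and cusp: "\<mu> \<le> \<bar>a * \<beta> - c * \<alpha>\<bar> \<or> \<nu> \<le> \<bar>d * \<alpha> - b * \<beta>\<bar> powr \<kappa> * \<bar>a * \<beta> - c * \<alpha>\<bar>"
  show "\<epsilon> \<le> \<bar>\<beta>\<bar>"
  proof (cases "\<mu> \<le> \<bar>c\<bar> * \<bar>\<beta>\<bar>")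
    case True
    then have "\<mu> / \<bar>c\<bar> \<le> \<bar>\<beta>\<bar>"
      using \<open>c \<noteq> 0\<close> by (simp add: divide_le_eq mult.commute)
    then show ?thesis
      by (simp add: \<epsilon>_def min_le_iff_disj)
  next
    case False
    with t_reduced have "\<nu> \<le> \<bar>s\<bar> powr \<kappa> * \<bar>t\<bar>"
      using cusp by (auto simp: s_def t_def abs_mult)
    have "\<bar>d\<bar> * \<bar>t\<bar> \<le> (\<bar>c\<bar> * \<bar>d\<bar>) * \<bar>\<beta>\<bar>"
      using t_reduced mult_left_mono[of "\<bar>t\<bar>" "\<bar>c\<bar> * \<bar>\<beta>\<bar>" "\<bar>d\<bar>"] by (simp add: t_def abs_mult mult_ac)
    then have "\<bar>s\<bar> \<le> K * \<bar>\<beta>\<bar>"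
      unfolding K_def s_def t_def by (rule sl2_abs_upper_right_le[OF det \<open>c \<noteq> 0\<close>])
    then have "\<bar>s\<bar> powr \<kappa> * \<bar>t\<bar> \<le> K powr \<kappa> * \<bar>\<beta>\<bar> powr \<kappa> * (\<bar>c\<bar> * \<bar>\<beta>\<bar>)"
      using \<open>\<kappa> > 0\<close> \<open>K > 0\<close> t_reduced
      by (intro mult_mono abs_powr_le_mult_powr) (auto simp: t_def abs_mult)
    also have "\<dots> = (K powr \<kappa> * \<bar>c\<bar>) * \<bar>\<beta>\<bar> powr (\<kappa> + 1)"
      using \<open>\<beta> \<noteq> 0\<close> by (simp add: powr_add)
    finally have "m \<le> \<bar>\<beta>\<bar> powr (\<kappa> + 1)"
      using \<open>\<nu> \<le> _\<close> \<open>K > 0\<close> \<open>c \<noteq> 0\<close> by (simp add: m_def divide_le_eq mult.commute)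
    then have "m powr (1 / (\<kappa> + 1)) \<le> \<bar>\<beta>\<bar>"
      using assms \<open>K > 0\<close> by (intro powr_inverse_le_of_le_powr) (auto simp: m_def)
    then show ?thesis
      by (simp add: \<epsilon>_def)
  qed
qed

lemma cusp_estimate_imp_diophantine:
  fixes a b c d \<kappa> \<mu> \<nu> \<epsilon> :: real
  assumes det: "a * d - b * c = 1" and "c \<noteq> 0" "\<kappa> > 0" "\<mu> > 0" "\<nu> > 0" "\<epsilon> > 0"
  obtains C where "C > 0"
    "\<And>\<alpha> \<beta>. \<epsilon> \<le> \<bar>\<beta>\<bar> \<Longrightarrow>
       \<mu> \<le> \<bar>a * \<beta> - c * \<alpha>\<bar> \<or> \<nu> \<le> \<bar>d * \<alpha> - b * \<beta>\<bar> powr \<kappa> * \<bar>a * \<beta> - c * \<alpha>\<bar> \<Longrightarrow>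
       C \<le> \<bar>\<beta>\<bar> powr \<kappa> * \<bar>a / c * \<beta> - \<alpha>\<bar>"
proof
  define K where "K = (1 + \<bar>d\<bar> * \<mu> / \<epsilon>) / \<bar>c\<bar>"
  define C where "C = min (\<epsilon> powr \<kappa> * \<mu>) (\<nu> / K powr \<kappa>) / \<bar>c\<bar>"
  have "K > 0"
    using assms by (simp add: K_def add_pos_nonneg)
  then show "C > 0"
    using assms by (simp add: C_def)
  fix \<alpha> \<beta> :: real
  define s where "s = d * \<alpha> - b * \<beta>"
  define t where "t = a * \<beta> - c * \<alpha>"
  assume "\<epsilon> \<le> \<bar>\<beta>\<bar>"
    and cusp: "\<mu> \<le> \<bar>a * \<beta> - c * \<alpha>\<bar> \<or> \<nu> \<le> \<bar>d * \<alpha> - b * \<beta>\<bar> powr \<kappa> * \<bar>a * \<beta> - c * \<alpha>\<bar>"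
  have "min (\<epsilon> powr \<kappa> * \<mu>) (\<nu> / K powr \<kappa>) \<le> \<bar>\<beta>\<bar> powr \<kappa> * \<bar>t\<bar>"
  proof (cases "\<mu> \<le> \<bar>t\<bar>")
    case True
    have "\<epsilon> powr \<kappa> * \<mu> \<le> \<bar>\<beta>\<bar> powr \<kappa> * \<bar>t\<bar>"
      using True \<open>\<epsilon> \<le> \<bar>\<beta>\<bar>\<close> assms by (intro mult_mono powr_mono2) auto
    then show ?thesis
      by simp
  next
    case False
    then have "\<nu> \<le> \<bar>s\<bar> powr \<kappa> * \<bar>t\<bar>"
      using cusp by (simp add: s_def t_def)
    have "\<bar>t\<bar> * \<epsilon> \<le> \<mu> * \<bar>\<beta>\<bar>"
      using False \<open>\<epsilon> \<le> \<bar>\<beta>\<bar>\<close> assms by (intro mult_mono) auto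
    then have "\<bar>d\<bar> * (\<bar>t\<bar> * \<epsilon>) \<le> \<bar>d\<bar> * (\<mu> * \<bar>\<beta>\<bar>)"
      by (rule mult_left_mono) simp
    then have "\<bar>d\<bar> * \<bar>t\<bar> \<le> \<bar>d\<bar> * \<mu> / \<epsilon> * \<bar>\<beta>\<bar>"
      using \<open>\<epsilon> > 0\<close> by (simp add: field_simps)
    then have "\<bar>s\<bar> \<le> K * \<bar>\<beta>\<bar>"
      unfolding K_def s_def t_def by (rule sl2_abs_upper_right_le[OF det \<open>c \<noteq> 0\<close>])
    then have "\<bar>s\<bar> powr \<kappa> * \<bar>t\<bar> \<le> K powr \<kappa> * (\<bar>\<beta>\<bar> powr \<kappa> * \<bar>t\<bar>)"
      using \<open>\<kappa> > 0\<close> \<open>K > 0\<close> by (simp add: mult.assoc[symmetric] mult_right_mono abs_powr_le_mult_powr)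
    with \<open>\<nu> \<le> _\<close> have "\<nu> / K powr \<kappa> \<le> \<bar>\<beta>\<bar> powr \<kappa> * \<bar>t\<bar>"
      using \<open>K > 0\<close> by (simp add: divide_le_eq mult.commute)
    then show ?thesis
      by simp
  qed
  then show "C \<le> \<bar>\<beta>\<bar> powr \<kappa> * \<bar>a / c * \<beta> - \<alpha>\<bar>"
    unfolding abs_divide_approx[OF \<open>c \<noteq> 0\<close>] by (simp add: C_def t_def divide_right_mono)
qed

definition avoids_cusp :: "(real^2) set \<Rightarrow> real \<Rightarrow> bool" where
  "avoids_cusp V \<kappa> \<longleftrightarrow> (\<exists>\<mu>>0. \<exists>\<nu>>0. \<forall>v\<in>V. \<bar>v$2\<bar> \<ge> \<mu> \<or> \<bar>v$1\<bar> powr \<kappa> * \<bar>v$2\<bar> \<ge> \<nu>)"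

definition diophantine_wrt :: "(real^2) set \<Rightarrow> real \<Rightarrow> real \<Rightarrow> bool" where
  "diophantine_wrt V \<kappa> x \<longleftrightarrow> (\<exists>C>0. \<forall>w\<in>V. w$2 \<noteq> 0 \<longrightarrow> \<bar>w$2\<bar> powr \<kappa> * \<bar>x * w$2 - w$1\<bar> \<ge> C)"

lemma adj2_mult_vec_nth:
  "(adj2 g *v w)$1 = g$2$2 * w$1 - g$1$2 * w$2" "(adj2 g *v w)$2 = g$1$1 * w$2 - g$2$1 * w$1"
  by simp_all

lemma avoids_cusp_adj2_iff:
  "avoids_cusp ((\<lambda>w. adj2 g *v w) ` V) \<kappa> \<longleftrightarrow> (\<exists>\<mu>>0. \<exists>\<nu>>0. \<forall>w\<in>V.
     \<mu> \<le> \<bar>g$1$1 * w$2 - g$2$1 * w$1\<bar> \<or>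
     \<nu> \<le> \<bar>g$2$2 * w$1 - g$1$2 * w$2\<bar> powr \<kappa> * \<bar>g$1$1 * w$2 - g$2$1 * w$1\<bar>)"
  unfolding avoids_cusp_def by (simp only: ball_simps adj2_mult_vec_nth)

lemma diophantine_imp_avoids_cusp:
  fixes V :: "(real^2) set" and g :: mat2
  assumes "det g = 1" "g$2$1 \<noteq> 0" "\<kappa> > 0"
    and primitive: "\<And>w. w \<in> V \<Longrightarrow> w$2 = 0 \<Longrightarrow> \<bar>w$1\<bar> = 1"
    and "diophantine_wrt V \<kappa> (g$1$1 / g$2$1)"
  shows "avoids_cusp ((\<lambda>w. adj2 g *v w) ` V) \<kappa>"
proof -
  have det: "g$1$1 * g$2$2 - g$1$2 * g$2$1 = 1"
    using assms(1) by (simp add: det_2)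
  obtain C where "C > 0" and approx: "\<And>w. w \<in> V \<Longrightarrow> w$2 \<noteq> 0 \<Longrightarrow>
      C \<le> \<bar>w$2\<bar> powr \<kappa> * \<bar>g$1$1 / g$2$1 * w$2 - w$1\<bar>"
    using assms(5) unfolding diophantine_wrt_def by blast
  obtain \<mu> \<nu> where "\<mu> > 0" "\<nu> > 0" and estimate: "\<And>\<alpha> \<beta>. (\<beta> = 0 \<Longrightarrow> \<bar>\<alpha>\<bar> = 1) \<Longrightarrow>
      (\<beta> \<noteq> 0 \<Longrightarrow> C \<le> \<bar>\<beta>\<bar> powr \<kappa> * \<bar>g$1$1 / g$2$1 * \<beta> - \<alpha>\<bar>) \<Longrightarrow>
      \<mu> \<le> \<bar>g$1$1 * \<beta> - g$2$1 * \<alpha>\<bar> \<or> \<nu> \<le> \<bar>g$2$2 * \<alpha> - g$1$2 * \<beta>\<bar> powr \<kappa> * \<bar>g$1$1 * \<beta> - g$2$1 * \<alpha>\<bar>"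
    using diophantine_imp_cusp_estimate[OF det assms(2,3) \<open>C > 0\<close>] by blast
  show ?thesis
    unfolding avoids_cusp_adj2_iff
    using \<open>\<mu> > 0\<close> \<open>\<nu> > 0\<close> estimate primitive approx by blast
qed

lemma avoids_cusp_imp_diophantine:
  fixes V :: "(real^2) set" and g :: mat2
  assumes "det g = 1" "g$2$1 \<noteq> 0" "\<kappa> > 0"
    and translation_invariant: "\<And>w n. w \<in> V \<Longrightarrow> transl (of_int n) *v w \<in> V"
    and "avoids_cusp ((\<lambda>w. adj2 g *v w) ` V) \<kappa>"
  shows "diophantine_wrt V \<kappa> (g$1$1 / g$2$1)"
proof -
  define a b c d where "a = g$1$1" "b = g$1$2" "c = g$2$1" "d = g$2$2"
  have det: "a * d - b * c = 1" and "c \<noteq> 0"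
    using assms(1,2) by (simp_all add: a_b_c_d_def det_2)
  obtain \<mu> \<nu> where "\<mu> > 0" "\<nu> > 0" and cusp: "\<And>w. w \<in> V \<Longrightarrow>
      \<mu> \<le> \<bar>a * w$2 - c * w$1\<bar> \<or> \<nu> \<le> \<bar>d * w$1 - b * w$2\<bar> powr \<kappa> * \<bar>a * w$2 - c * w$1\<bar>"
    using assms(5) unfolding avoids_cusp_adj2_iff a_b_c_d_def by blast
  obtain \<epsilon> where "\<epsilon> > 0" and lower: "\<And>\<alpha> \<beta>. \<beta> \<noteq> 0 \<Longrightarrow> \<bar>a * \<beta> - c * \<alpha>\<bar> < \<bar>c * \<beta>\<bar> \<Longrightarrow>
      \<mu> \<le> \<bar>a * \<beta> - c * \<alpha>\<bar> \<or> \<nu> \<le> \<bar>d * \<alpha> - b * \<beta>\<bar> powr \<kappa> * \<bar>a * \<beta> - c * \<alpha>\<bar> \<Longrightarrow> \<epsilon> \<le> \<bar>\<beta>\<bar>"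
    using cusp_estimate_imp_lower_left_bounded_below[OF det \<open>c \<noteq> 0\<close> assms(3) \<open>\<mu> > 0\<close> \<open>\<nu> > 0\<close>] by blast
  have "\<epsilon> \<le> \<bar>w$2\<bar>" if w: "w \<in> V" and "w$2 \<noteq> 0" for w
  proof -
    obtain n :: int where n: "\<bar>(a * w$2 - c * w$1) - of_int n * (c * w$2)\<bar> < \<bar>c * w$2\<bar>"
      using exists_int_abs_diff_mult_less \<open>c \<noteq> 0\<close> \<open>w$2 \<noteq> 0\<close> by (metis mult_eq_0_iff)
    define w' where "w' = transl (of_int n) *v w"
    have "w' \<in> V"
      using translation_invariant[OF w] by (simp add: w'_def)
    moreover have "w'$1 = w$1 + of_int n * w$2" "w'$2 = w$2"
      by (simp_all add: w'_def transl_def)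
    ultimately show ?thesis
      using lower[of "w$2" "w'$1"] cusp[of w'] n \<open>w$2 \<noteq> 0\<close> by (simp add: algebra_simps)
  qed
  moreover obtain C where "C > 0" and "\<And>\<alpha> \<beta>. \<epsilon> \<le> \<bar>\<beta>\<bar> \<Longrightarrow>
      \<mu> \<le> \<bar>a * \<beta> - c * \<alpha>\<bar> \<or> \<nu> \<le> \<bar>d * \<alpha> - b * \<beta>\<bar> powr \<kappa> * \<bar>a * \<beta> - c * \<alpha>\<bar> \<Longrightarrow>
      C \<le> \<bar>\<beta>\<bar> powr \<kappa> * \<bar>a / c * \<beta> - \<alpha>\<bar>"
    using cusp_estimate_imp_diophantine[OF det \<open>c \<noteq> 0\<close> assms(3) \<open>\<mu> > 0\<close> \<open>\<nu> > 0\<close> \<open>\<epsilon> > 0\<close>] by blast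
  ultimately show ?thesis
    unfolding diophantine_wrt_def a_b_c_d_def[symmetric] using cusp by force
qed

lemma orbit_e1_primitive:
  assumes "{\<gamma>\<in>\<Gamma>. \<gamma>$2$1 = 0} = {s *\<^sub>R transl (of_int n) | s n. s \<in> {1, -1}}"
    and "w \<in> (\<lambda>\<gamma>. \<gamma> *v e1) ` \<Gamma>" "w$2 = 0"
  shows "\<bar>w$1\<bar> = 1"
proof -
  obtain \<gamma> where "\<gamma> \<in> \<Gamma>" "w = \<gamma> *v e1"
    using assms(2) by blast
  then have "\<gamma> \<in> {\<gamma>\<in>\<Gamma>. \<gamma>$2$1 = 0}"
    using assms(3) by simp
  then obtain s n where "s \<in> {1, -1}" "\<gamma> = s *\<^sub>R transl (of_int n)"
    unfolding assms(1) by blast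
  with \<open>w = \<gamma> *v e1\<close> show ?thesis
    by (auto simp: transl_def)
qed

lemma orbit_e1_translation_invariant:
  assumes "psl_subgroup \<Gamma>"
    and "{\<gamma>\<in>\<Gamma>. \<gamma>$2$1 = 0} = {s *\<^sub>R transl (of_int n) | s n. s \<in> {1, -1}}"
    and "w \<in> (\<lambda>\<gamma>. \<gamma> *v e1) ` \<Gamma>"
  shows "transl (of_int n) *v w \<in> (\<lambda>\<gamma>. \<gamma> *v e1) ` \<Gamma>"
proof -
  obtain \<gamma> where "\<gamma> \<in> \<Gamma>" "w = \<gamma> *v e1"
    using assms(3) by blast
  have "transl (of_int n) \<in> {s *\<^sub>R transl (of_int n) | s n. s \<in> {1, -1}}"
    by (intro CollectI exI[of _ 1] exI[of _ n]) simp
  then have "transl (of_int n) ** \<gamma> \<in> \<Gamma>"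
    using assms(1) \<open>\<gamma> \<in> \<Gamma>\<close> unfolding assms(2)[symmetric] psl_subgroup_def by blast
  then show ?thesis
    using \<open>w = \<gamma> *v e1\<close> by (auto simp: matrix_vector_mul_assoc)
qed

theorem lemmaA6:
  fixes \<Gamma> :: "mat2 set" and \<kappa> :: real and g :: mat2
  assumes "psl_lattice \<Gamma>" and "nonuniform \<Gamma>"
    and "{\<gamma>\<in>\<Gamma>. \<gamma>$2$1 = 0} = {s *\<^sub>R transl (of_int n) | s n. s \<in> {1, -1}}"
    and "\<kappa> > 0"
    and "g \<in> SL2" and "g$2$1 \<noteq> 0"
  shows "coset \<Gamma> g \<notin> S_jk \<Gamma> \<kappa> \<longleftrightarrow> g$1$1 / g$2$1 \<notin> S_k \<Gamma> \<kappa>"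
proof -
  let ?V = "(\<lambda>\<gamma>. \<gamma> *v e1) ` \<Gamma>"
  have subgroup: "psl_subgroup \<Gamma>"
    using assms(1) by (simp add: psl_lattice_def)
  have "det g = 1"
    using assms(5) by (simp add: SL2_def)
  have "coset \<Gamma> g \<in> S_jk \<Gamma> \<kappa> \<longleftrightarrow> avoids_cusp ((\<lambda>w. adj2 g *v w) ` ?V) \<kappa>"
    unfolding m_j_coset_image[OF subgroup assms(5), symmetric] by (simp add: S_jk_def avoids_cusp_def)
  also have "\<dots> \<longleftrightarrow> diophantine_wrt ?V \<kappa> (g$1$1 / g$2$1)"
    using diophantine_imp_avoids_cusp[OF \<open>det g = 1\<close> assms(6,4) orbit_e1_primitive[OF assms(3)]]
      avoids_cusp_imp_diophantine[OF \<open>det g = 1\<close> assms(6,4)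
        orbit_e1_translation_invariant[OF subgroup assms(3)]]
    by blast
  also have "\<dots> \<longleftrightarrow> g$1$1 / g$2$1 \<in> S_k \<Gamma> \<kappa>"
    by (simp add: S_k_def diophantine_wrt_def)
  finally show ?thesis
    by simp
qed

end
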